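(* Let $E$ be a finite set and $\mathcal{A}$ a set-arrangement on $E$. For each $A\in\mathcal{A}$ let $R_A\subseteq[\mathcal{F}(A),\mathcal{F}(A)]$ and $L_A=\mathcal{F}(A)/\langle R_A\rangle$. Let $\mathcal{L}=\mathcal{F}(E)/\langle R\rangle$, where $$R=\bigcup_{A\in\mathcal{A}}R_A\ \cup\ \{[x,y]:\ x,y\in E,\ \{x,y\}\not\subseteq A \text{ for every } A\in\mathcal{A}\}.$$ For $A\in\mathcal{A}$ let $\pi_A:\mathcal{L}\to L_A$ be the Lie homomorphism sending each $x\in E\setminus A$ to $0$ and each $x\in A$ to itself, and let $s_A:L_A\to\mathcal{L}$ be the Lie homomorphism induced by the inclusion $A\subseteq E$ (so $\pi_A\circ s_A=\mathrm{id}_{L_A}$). Let $\pi_A'$ and $s_A'$ denote the restrictions to the derived algebras $\mathcal{L}'=[\mathcal{L},\mathcal{L}]$ and $L_A'=[L_A,L_A]$, and let $I$ be the kernel of the surjective Lie homomorphism $\pi=\bigoplus_{A\in\mathcal{A}}\pi_A':\mathcal{L}'\to\bigoplus_{A\in\mathcal{A}}L_A'$. Then $I=0$ if and only if $[x,s_A'(L_A')]=0$ in $\mathcal{L}$ for all $A\in\mathcal{A}$ and all $x\in E\setminus A$.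
   Context: All Lie algebras are over a fixed field. $\mathcal{F}(X)$ denotes the free Lie algebra on a set $X$, and $\langle S\rangle$ the ideal generated by $S$. A set-arrangement on a finite set $E$ is a set $\mathcal{A}$ of subsets of $E$ such that $|A|\ge 3$ for all $A\in\mathcal{A}$ and $|A\cap B|\le 1$ for all distinct $A,B\in\mathcal{A}$. In the claim, elements $x\in E$ are identified with their images in $\mathcal{L}$. *)

theory Defs
  imports Main "HOL-Library.Function_Algebras"
begin

text \<open>Free associative algebra (noncommutative formal series) over a field 'k in
  letters of type 'e: functions from words to coefficients.\<close>

definition fmul :: "('e list \<Rightarrow> 'k::field) \<Rightarrow> ('e list \<Rightarrow> 'k) \<Rightarrow> ('e list \<Rightarrow> 'k)" where
  "fmul p q = (\<lambda>w. \<Sum>i\<le>length w. p (take i w) * q (drop i w))"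

definition lie_br :: "('e list \<Rightarrow> 'k::field) \<Rightarrow> ('e list \<Rightarrow> 'k) \<Rightarrow> ('e list \<Rightarrow> 'k)" where
  "lie_br p q = fmul p q - fmul q p"

definition gen :: "'e \<Rightarrow> ('e list \<Rightarrow> 'k::field)" where
  "gen x = (\<lambda>w. if w = [x] then 1 else 0)"

text \<open>The free Lie algebra F(X): the Lie subalgebra of the free associative algebra
  generated by the letters in X (over a field this is the free Lie algebra on X).\<close>

inductive_set free_lie :: "'e set \<Rightarrow> ('e list \<Rightarrow> 'k::field) set" for X :: "'e set" where
  fl_gen: "x \<in> X \<Longrightarrow> gen x \<in> free_lie X"
| fl_zero: "0 \<in> free_lie X"
| fl_add: "p \<in> free_lie X \<Longrightarrow> q \<in> free_lie X \<Longrightarrow> p + q \<in> free_lie X"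
| fl_smult: "p \<in> free_lie X \<Longrightarrow> (\<lambda>w. c * p w) \<in> free_lie X"
| fl_br: "p \<in> free_lie X \<Longrightarrow> q \<in> free_lie X \<Longrightarrow> lie_br p q \<in> free_lie X"

inductive_set derived_free :: "'e set \<Rightarrow> ('e list \<Rightarrow> 'k::field) set" for X :: "'e set" where
  df_br: "p \<in> free_lie X \<Longrightarrow> q \<in> free_lie X \<Longrightarrow> lie_br p q \<in> derived_free X"
| df_zero: "0 \<in> derived_free X"
| df_add: "p \<in> derived_free X \<Longrightarrow> q \<in> derived_free X \<Longrightarrow> p + q \<in> derived_free X"
| df_smult: "p \<in> derived_free X \<Longrightarrow> (\<lambda>w. c * p w) \<in> derived_free X"

inductive_set lie_ideal :: "'e set \<Rightarrow> ('e list \<Rightarrow> 'k::field) set \<Rightarrow> ('e list \<Rightarrow> 'k) set"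
  for X :: "'e set" and S :: "('e list \<Rightarrow> 'k) set" where
  li_gen: "s \<in> S \<Longrightarrow> s \<in> lie_ideal X S"
| li_zero: "0 \<in> lie_ideal X S"
| li_add: "p \<in> lie_ideal X S \<Longrightarrow> q \<in> lie_ideal X S \<Longrightarrow> p + q \<in> lie_ideal X S"
| li_smult: "p \<in> lie_ideal X S \<Longrightarrow> (\<lambda>w. c * p w) \<in> lie_ideal X S"
| li_br: "a \<in> free_lie X \<Longrightarrow> p \<in> lie_ideal X S \<Longrightarrow> lie_br a p \<in> lie_ideal X S"

text \<open>The homomorphism F(E) -> F(A) sending letters outside A to 0 and fixing letters in A.\<close>

definition proj :: "'e set \<Rightarrow> ('e list \<Rightarrow> 'k::field) \<Rightarrow> ('e list \<Rightarrow> 'k)" where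
  "proj A p = (\<lambda>w. if set w \<subseteq> A then p w else 0)"

definition set_arrangement :: "'e set \<Rightarrow> 'e set set \<Rightarrow> bool" where
  "set_arrangement E \<A> \<longleftrightarrow> (\<forall>A\<in>\<A>. A \<subseteq> E \<and> card A \<ge> 3) \<and>
     (\<forall>A\<in>\<A>. \<forall>B\<in>\<A>. A \<noteq> B \<longrightarrow> card (A \<inter> B) \<le> 1)"

definition rels :: "'e set \<Rightarrow> 'e set set \<Rightarrow> ('e set \<Rightarrow> ('e list \<Rightarrow> 'k::field) set) \<Rightarrow> ('e list \<Rightarrow> 'k) set" where
  "rels E \<A> RR = (\<Union>A\<in>\<A>. RR A) \<union>
     {lie_br (gen x) (gen y) | x y. x \<in> E \<and> y \<in> E \<and> (\<forall>A\<in>\<A>. \<not> {x, y} \<subseteq> A)}"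

end

theory Submission
  imports Defs
begin

(* Restricting coefficients to words over B is an algebra endomorphism \<pi>_B of the
   free associative algebra; on F(E) it induces the projection \<pi>_B, on F(B) it is the identity.
   Words over at most one letter commute, so \<pi>_B kills F(A)' for A \<noteq> B, and \<pi>_B maps
   the relation ideal of \<L> into that of L_B. Hence [x, F(A)'] with x \<notin> A lies in
   the kernel, which gives one direction. Conversely, the hypothesis makes
   \<Sum>_A F(A)' + \<langle>R\<rangle> stable under ad x for every letter x; since it contains all
   brackets of letters, it contains F(E)'. Writing u \<in> F(E)' as \<Sum>_A v_A + j and
   applying \<pi>_B recovers v_B = \<pi>_B (u - j), so if every \<pi>_B u lies in the local
   ideal, so does every v_B, and u \<in> \<langle>R\<rangle>. *)

(* As simp rules, the pointwise evaluation rules make simp \<eta>-expand series such as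
   p + q, which blocks the algebraic rewrite rules below; they are used explicitly. *)
declare plus_fun_apply [simp del] zero_fun_apply [simp del] minus_apply [simp del]

lemma sum_fun_apply: "sum f S x = (\<Sum>a\<in>S. f a x)"
  by (induction S rule: infinite_finite_induct) (auto simp: zero_fun_apply plus_fun_apply)

lemma fmul_add_left: "fmul (p + q) r = fmul p r + fmul q r"
  by (rule ext) (simp add: fmul_def distrib_right sum.distrib plus_fun_apply)

lemma fmul_add_right: "fmul r (p + q) = fmul r p + fmul r q"
  by (rule ext) (simp add: fmul_def distrib_left sum.distrib plus_fun_apply)

lemma fmul_scale_left: "fmul (\<lambda>w. c * p w) q = (\<lambda>w. c * fmul p q w)"
  by (rule ext) (simp add: fmul_def sum_distrib_left mult.assoc)

lemma fmul_scale_right: "fmul q (\<lambda>w. c * p w) = (\<lambda>w. c * fmul q p w)"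
  by (rule ext) (simp add: fmul_def sum_distrib_left ac_simps)

lemma fmul_diff_left: "fmul (p - q) r = fmul p r - fmul q r"
  by (rule ext) (simp add: fmul_def left_diff_distrib sum_subtractf minus_apply)

lemma fmul_diff_right: "fmul r (p - q) = fmul r p - fmul r q"
  by (rule ext) (simp add: fmul_def right_diff_distrib sum_subtractf minus_apply)

lemma fmul_assoc: "fmul (fmul p q) r = fmul p (fmul q r)"
proof (rule ext)
  fix w :: "'a list"
  define n where "n = length w"
  define g where "g j k = p (take j w) * q (take k (drop j w)) * r (drop (j + k) w)" for j k
  have "fmul (fmul p q) r w = (\<Sum>i\<le>n. \<Sum>j\<le>i. g j (i - j))"
    unfolding fmul_def n_def
    by (auto simp: g_def sum_distrib_right take_take drop_take min_def intro!: sum.cong)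
  also have "\<dots> = (\<Sum>(j, k)\<in>{(j, k). j + k \<le> n}. g j k)"
    by (rule sum.triangle_reindex_eq[symmetric])
  also have "{(j, k). j + k \<le> n} = Sigma {..n} (\<lambda>j. {..n - j})"
    by auto
  also have "(\<Sum>(j, k)\<in>Sigma {..n} (\<lambda>j. {..n - j}). g j k) = (\<Sum>j\<le>n. \<Sum>k\<le>n - j. g j k)"
    by (rule sum.Sigma[symmetric]) auto
  also have "\<dots> = fmul p (fmul q r) w"
    unfolding fmul_def n_def
    by (auto simp: g_def sum_distrib_left drop_drop add.commute mult.assoc intro!: sum.cong)
  finally show "fmul (fmul p q) r w = fmul p (fmul q r) w" .
qed

lemma fmul_replicate_commute: "fmul p q (replicate n z) = fmul q p (replicate n z)"
proof -
  have "fmul p q (replicate n z) = (\<Sum>i\<le>n. p (replicate i z) * q (replicate (n - i) z))"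
    by (simp add: fmul_def)
  also have "\<dots> = (\<Sum>i\<le>n. p (replicate (n - i) z) * q (replicate i z))"
    by (rule sum.reindex_bij_witness[where i = "\<lambda>i. n - i" and j = "\<lambda>i. n - i"]) auto
  also have "\<dots> = fmul q p (replicate n z)"
    by (simp add: fmul_def mult.commute)
  finally show ?thesis .
qed

lemma lie_br_add_left: "lie_br (p + q) r = lie_br p r + lie_br q r"
  by (simp add: lie_br_def fmul_add_left fmul_add_right)

lemma lie_br_add_right: "lie_br r (p + q) = lie_br r p + lie_br r q"
  by (simp add: lie_br_def fmul_add_left fmul_add_right)

lemma lie_br_scale_left: "lie_br (\<lambda>w. c * p w) q = (\<lambda>w. c * lie_br p q w)"
  by (rule ext)
    (simp add: lie_br_def fmul_scale_left fmul_scale_right right_diff_distrib minus_apply)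

lemma lie_br_scale_right: "lie_br q (\<lambda>w. c * p w) = (\<lambda>w. c * lie_br q p w)"
  by (rule ext)
    (simp add: lie_br_def fmul_scale_left fmul_scale_right right_diff_distrib minus_apply)

lemma lie_br_zero_left [simp]: "lie_br 0 q = 0"
  by (rule ext) (simp add: lie_br_def fmul_def zero_fun_apply minus_apply)

lemma lie_br_zero_right [simp]: "lie_br q 0 = 0"
  by (rule ext) (simp add: lie_br_def fmul_def zero_fun_apply minus_apply)

lemma lie_br_diff_right: "lie_br r (p - q) = lie_br r p - lie_br r q"
  by (simp add: lie_br_def fmul_diff_left fmul_diff_right)

lemma lie_br_sum_right: "lie_br r (sum f S) = (\<Sum>a\<in>S. lie_br r (f a))"
  by (induction S rule: infinite_finite_induct) (simp_all add: lie_br_add_right)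

lemma lie_br_jacobi_left: "lie_br (lie_br a b) q = lie_br a (lie_br b q) - lie_br b (lie_br a q)"
  by (simp add: lie_br_def fmul_diff_left fmul_diff_right fmul_assoc algebra_simps)

lemma lie_br_jacobi_right: "lie_br y (lie_br a b) = lie_br a (lie_br y b) - lie_br b (lie_br y a)"
  by (simp add: lie_br_def fmul_diff_left fmul_diff_right fmul_assoc algebra_simps)

lemma set_take_drop_subset_iff: "set w \<subseteq> A \<longleftrightarrow> set (take i w) \<subseteq> A \<and> set (drop i w) \<subseteq> A"
  by (metis append_take_drop_id set_append Un_subset_iff)

lemma proj_add: "proj A (p + q) = proj A p + proj A q"
  by (rule ext) (simp add: proj_def plus_fun_apply)

lemma proj_scale: "proj A (\<lambda>w. c * p w) = (\<lambda>w. c * proj A p w)"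
  by (rule ext) (simp add: proj_def)

lemma proj_zero [simp]: "proj A 0 = 0"
  by (rule ext) (simp add: proj_def zero_fun_apply)

lemma proj_diff: "proj A (p - q) = proj A p - proj A q"
  by (rule ext) (simp add: proj_def minus_apply)

lemma proj_sum: "proj A (sum f S) = (\<Sum>a\<in>S. proj A (f a))"
  by (rule ext) (simp add: proj_def sum_fun_apply)

lemma proj_gen: "proj A (gen x) = (if x \<in> A then gen x else 0)"
  by (rule ext) (auto simp: proj_def gen_def zero_fun_apply)

lemma proj_proj: "proj B (proj A p) = proj (A \<inter> B) p"
  by (rule ext) (auto simp: proj_def)

lemma proj_fmul: "proj A (fmul p q) = fmul (proj A p) (proj A q)"
proof (rule ext)
  fix w :: "'a list"
  show "proj A (fmul p q) w = fmul (proj A p) (proj A q) w"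
  proof (cases "set w \<subseteq> A")
    case True
    then have "set (take i w) \<subseteq> A" "set (drop i w) \<subseteq> A" for i
      by (meson set_take_drop_subset_iff)+
    with True show ?thesis
      by (simp add: proj_def fmul_def)
  next
    case False
    then have "proj A p (take i w) * proj A q (drop i w) = 0" for i
      using set_take_drop_subset_iff[of w A i] by (auto simp: proj_def)
    then have "fmul (proj A p) (proj A q) w = 0"
      unfolding fmul_def by (intro sum.neutral) blast
    with False show ?thesis
      by (simp add: proj_def)
  qed
qed

lemma proj_lie_br: "proj A (lie_br p q) = lie_br (proj A p) (proj A q)"
  by (simp add: lie_br_def proj_diff proj_fmul)

lemma fmul_proj_commute:
  assumes "finite C" "card C \<le> 1"
  shows "fmul (proj C p) (proj C q) = fmul (proj C q) (proj C p)"
proof (rule ext)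
  fix w :: "'a list"
  show "fmul (proj C p) (proj C q) w = fmul (proj C q) (proj C p) w"
  proof (cases "set w \<subseteq> C")
    case True
    have one_letter: "\<forall>a\<in>C. \<forall>b\<in>C. a = b"
      using assms card_le_Suc0_iff_eq[of C] by simp
    have "y = hd w" if "y \<in> set w" for y
    proof -
      from that have "hd w \<in> set w"
        by (cases w) auto
      with that True one_letter show ?thesis
        by blast
    qed
    then have "replicate (length w) (hd w) = w"
      by (simp add: replicate_length_same)
    then show ?thesis
      using fmul_replicate_commute[of "proj C p" "proj C q" "length w" "hd w"] by simp
  next
    case False
    then have "proj C p (take i w) * proj C q (drop i w) = 0"
      and "proj C q (take i w) * proj C p (drop i w) = 0" for i
      using set_take_drop_subset_iff[of w C i] by (auto simp: proj_def)
    then show ?thesis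
      unfolding fmul_def by (simp only:)
  qed
qed

lemma proj_free_lie_id: "p \<in> free_lie A \<Longrightarrow> proj A p = p"
  by (induction rule: free_lie.induct) (simp_all add: proj_gen proj_add proj_scale proj_lie_br)

lemma proj_free_lie: "p \<in> free_lie E \<Longrightarrow> proj B p \<in> free_lie B"
  by (induction rule: free_lie.induct)
    (simp_all add: proj_gen proj_add proj_scale proj_lie_br free_lie.intros)

lemma free_lie_mono: "p \<in> free_lie A \<Longrightarrow> A \<subseteq> B \<Longrightarrow> p \<in> free_lie B"
  by (induction rule: free_lie.induct) (auto intro: free_lie.intros)

lemma derived_free_imp_free_lie: "v \<in> derived_free A \<Longrightarrow> v \<in> free_lie A"
  by (induction rule: derived_free.induct) (auto intro: free_lie.intros)

(* On F(A), \<pi>_B only sees the letters of A \<inter> B, and words over one letter commute. *)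

lemma proj_derived_free_eq_0:
  assumes "v \<in> derived_free A" "finite (A \<inter> B)" "card (A \<inter> B) \<le> 1"
  shows "proj B v = 0"
  using assms(1)
proof (induction rule: derived_free.induct)
  case (df_br p q)
  then have "proj B p = proj (A \<inter> B) p" "proj B q = proj (A \<inter> B) q"
    by (metis proj_free_lie_id proj_proj)+
  then show ?case
    by (simp only: proj_lie_br) (simp add: lie_br_def fmul_proj_commute[OF assms(2,3)])
next
  case (df_add p q)
  then show ?case by (simp add: proj_add)
next
  case (df_smult p c)
  then show ?case by (simp add: proj_scale zero_fun_def)
qed simp

lemma lie_ideal_uminus: "p \<in> lie_ideal X S \<Longrightarrow> - p \<in> lie_ideal X S"
  using lie_ideal.li_smult[of p X S "-1"] by (simp add: fun_Compl_def)

lemma lie_ideal_diff: "p \<in> lie_ideal X S \<Longrightarrow> q \<in> lie_ideal X S \<Longrightarrow> p - q \<in> lie_ideal X S"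
  unfolding diff_conv_add_uminus by (intro lie_ideal.li_add lie_ideal_uminus)

lemma lie_ideal_sum:
  "finite I \<Longrightarrow> (\<And>i. i \<in> I \<Longrightarrow> f i \<in> lie_ideal X S) \<Longrightarrow> sum f I \<in> lie_ideal X S"
  by (induction I rule: finite_induct) (auto intro: lie_ideal.intros)

lemma lie_ideal_mono: "p \<in> lie_ideal Y T \<Longrightarrow> Y \<subseteq> X \<Longrightarrow> T \<subseteq> S \<Longrightarrow> p \<in> lie_ideal X S"
  by (induction rule: lie_ideal.induct) (auto intro: lie_ideal.intros free_lie_mono)

lemma proj_lie_ideal:
  assumes "p \<in> lie_ideal X S" and "\<And>s. s \<in> S \<Longrightarrow> proj B s \<in> lie_ideal B T"
  shows "proj B p \<in> lie_ideal B T"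
  using assms(1)
  by (induction rule: lie_ideal.induct)
    (auto simp: assms(2) proj_add proj_scale proj_lie_br intro: lie_ideal.intros proj_free_lie)

locale ad_invariant_subspace =
  fixes X :: "'e set" and V :: "('e list \<Rightarrow> 'k::field) set"
  assumes zero_mem: "0 \<in> V"
    and add_mem: "p \<in> V \<Longrightarrow> q \<in> V \<Longrightarrow> p + q \<in> V"
    and scale_mem: "p \<in> V \<Longrightarrow> (\<lambda>w. c * p w) \<in> V"
    and lie_br_gen_mem: "x \<in> X \<Longrightarrow> q \<in> V \<Longrightarrow> lie_br (gen x) q \<in> V"
begin

lemma diff_mem:
  assumes "p \<in> V" "q \<in> V"
  shows "p - q \<in> V"
proof -
  have "p - q = p + (\<lambda>w. (-1) * q w)"
    by (rule ext) (simp add: plus_fun_apply minus_apply)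
  also have "\<dots> \<in> V"
    using assms by (intro add_mem scale_mem)
  finally show ?thesis .
qed

lemma lie_br_mem: "p \<in> free_lie X \<Longrightarrow> q \<in> V \<Longrightarrow> lie_br p q \<in> V"
proof (induction arbitrary: q rule: free_lie.induct)
  case (fl_br a b)
  show ?case
    unfolding lie_br_jacobi_left by (intro diff_mem fl_br.IH fl_br.prems)
qed (simp_all add: lie_br_gen_mem zero_mem add_mem scale_mem lie_br_add_left lie_br_scale_left)

lemma derived_free_subset:
  assumes gen_gen: "\<And>x y. x \<in> X \<Longrightarrow> y \<in> X \<Longrightarrow> lie_br (gen x) (gen y) \<in> V"
  shows "derived_free X \<subseteq> V"
proof -
  have gen_free: "lie_br (gen y) q \<in> V" if "q \<in> free_lie X" "y \<in> X" for y q
    using that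
  proof (induction rule: free_lie.induct)
    case (fl_br a b)
    show ?case
      unfolding lie_br_jacobi_right[of "gen y"]
      by (intro diff_mem lie_br_mem fl_br.hyps fl_br.IH fl_br.prems)
  qed (simp_all add: gen_gen zero_mem add_mem scale_mem lie_br_add_right lie_br_scale_right)
  have free_free: "lie_br p q \<in> V" if "p \<in> free_lie X" "q \<in> free_lie X" for p q
    using that
  proof (induction rule: free_lie.induct)
    case (fl_br a b)
    show ?case
      unfolding lie_br_jacobi_left by (intro diff_mem lie_br_mem fl_br.hyps fl_br.IH fl_br.prems)
  qed (simp_all add: gen_free zero_mem add_mem scale_mem lie_br_add_left lie_br_scale_left)
  show ?thesis
  proof
    show "u \<in> V" if "u \<in> derived_free X" for u
      using that by induction (simp_all add: free_free zero_mem add_mem scale_mem)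
  qed
qed

end

definition local_derived_sum ::
    "'e set set \<Rightarrow> 'e set \<Rightarrow> ('e list \<Rightarrow> 'k::field) set \<Rightarrow> ('e list \<Rightarrow> 'k) set" where
  "local_derived_sum \<A> X S =
     {u. \<exists>v. (\<forall>A\<in>\<A>. v A \<in> derived_free A) \<and> u - sum v \<A> \<in> lie_ideal X S}"

lemma local_derived_sumI:
  "\<forall>A\<in>\<A>. v A \<in> derived_free A \<Longrightarrow> u - sum v \<A> \<in> lie_ideal X S \<Longrightarrow> u \<in> local_derived_sum \<A> X S"
  unfolding local_derived_sum_def by blast

lemma local_derived_sumE:
  assumes "u \<in> local_derived_sum \<A> X S"
  obtains v where "\<forall>A\<in>\<A>. v A \<in> derived_free A" "u - sum v \<A> \<in> lie_ideal X S"
  using assms unfolding local_derived_sum_def by blast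

lemma lie_ideal_imp_local_derived_sum: "u \<in> lie_ideal X S \<Longrightarrow> u \<in> local_derived_sum \<A> X S"
  unfolding local_derived_sum_def by (auto intro!: exI[of _ "\<lambda>_. 0"] derived_free.df_zero)

lemma derived_free_imp_local_derived_sum:
  assumes "finite \<A>" "A \<in> \<A>" "u \<in> derived_free A"
  shows "u \<in> local_derived_sum \<A> X S"
proof -
  have "sum (\<lambda>B. if B = A then u else 0) \<A> = u"
    using assms by (simp add: sum.delta')
  with assms show ?thesis
    unfolding local_derived_sum_def
    by (auto intro!: exI[of _ "\<lambda>B. if B = A then u else 0"] derived_free.df_zero lie_ideal.li_zero)
qed

lemma local_derived_sum_add:
  assumes "u \<in> local_derived_sum \<A> X S" "u' \<in> local_derived_sum \<A> X S"
  shows "u + u' \<in> local_derived_sum \<A> X S"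
proof -
  obtain v where v: "\<forall>A\<in>\<A>. v A \<in> derived_free A" "u - sum v \<A> \<in> lie_ideal X S"
    using assms(1) by (rule local_derived_sumE)
  obtain v' where v': "\<forall>A\<in>\<A>. v' A \<in> derived_free A" "u' - sum v' \<A> \<in> lie_ideal X S"
    using assms(2) by (rule local_derived_sumE)
  have "(u + u') - (\<Sum>A\<in>\<A>. v A + v' A) = (u - sum v \<A>) + (u' - sum v' \<A>)"
    by (simp add: sum.distrib)
  then have "(u + u') - (\<Sum>A\<in>\<A>. v A + v' A) \<in> lie_ideal X S"
    using v(2) v'(2) by (metis lie_ideal.li_add)
  moreover have "\<forall>A\<in>\<A>. v A + v' A \<in> derived_free A"
    using v(1) v'(1) by (simp add: derived_free.df_add)
  ultimately show ?thesis
    by (intro local_derived_sumI)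
qed

lemma local_derived_sum_scale:
  assumes "u \<in> local_derived_sum \<A> X S"
  shows "(\<lambda>w. c * u w) \<in> local_derived_sum \<A> X S"
proof -
  obtain v where v: "\<forall>A\<in>\<A>. v A \<in> derived_free A" "u - sum v \<A> \<in> lie_ideal X S"
    using assms by (rule local_derived_sumE)
  have "(\<lambda>w. c * u w) - (\<Sum>A\<in>\<A>. (\<lambda>w. c * v A w)) = (\<lambda>w. c * (u - sum v \<A>) w)"
    by (rule ext) (simp add: sum_fun_apply sum_distrib_left right_diff_distrib minus_apply)
  then have "(\<lambda>w. c * u w) - (\<Sum>A\<in>\<A>. (\<lambda>w. c * v A w)) \<in> lie_ideal X S"
    using v(2) by (metis lie_ideal.li_smult)
  moreover have "\<forall>A\<in>\<A>. (\<lambda>w. c * v A w) \<in> derived_free A"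
    using v(1) by (simp add: derived_free.df_smult)
  ultimately show ?thesis
    by (intro local_derived_sumI)
qed

lemma local_derived_sum_sum:
  "finite I \<Longrightarrow> (\<And>i. i \<in> I \<Longrightarrow> f i \<in> local_derived_sum \<A> X S) \<Longrightarrow>
    sum f I \<in> local_derived_sum \<A> X S"
  by (induction I rule: finite_induct)
    (simp_all add: lie_ideal_imp_local_derived_sum lie_ideal.li_zero local_derived_sum_add)

locale lie_arrangement =
  fixes E :: "'e set" and \<A> :: "'e set set" and RR :: "'e set \<Rightarrow> ('e list \<Rightarrow> 'k::field) set"
  assumes finite_ground: "finite E"
    and arrangement: "set_arrangement E \<A>"
    and relators_derived: "A \<in> \<A> \<Longrightarrow> RR A \<subseteq> derived_free A"
begin

lemma subset_ground: "A \<in> \<A> \<Longrightarrow> A \<subseteq> E"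
  using arrangement unfolding set_arrangement_def by blast

lemma finite_arrangement: "finite \<A>"
proof (rule finite_subset)
  show "\<A> \<subseteq> Pow E"
    using subset_ground by blast
  show "finite (Pow E)"
    using finite_ground by simp
qed

lemma proj_derived_free_other:
  assumes "A \<in> \<A>" "B \<in> \<A>" "A \<noteq> B" "v \<in> derived_free A"
  shows "proj B v = 0"
proof (rule proj_derived_free_eq_0[OF assms(4)])
  show "finite (A \<inter> B)"
    using subset_ground[OF assms(1)] by (blast intro: finite_subset[OF _ finite_ground])
  show "card (A \<inter> B) \<le> 1"
    using arrangement assms(1-3) unfolding set_arrangement_def by blast
qed

lemma proj_sum_local_derived:
  assumes "\<forall>A\<in>\<A>. v A \<in> derived_free A" "B \<in> \<A>"
  shows "proj B (sum v \<A>) = v B"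
proof -
  have "proj B (sum v \<A>) = proj B (v B) + (\<Sum>A\<in>\<A> - {B}. proj B (v A))"
    by (simp add: proj_sum proj_add sum.remove[OF finite_arrangement assms(2)])
  also have "(\<Sum>A\<in>\<A> - {B}. proj B (v A)) = 0"
    using assms by (intro sum.neutral) (auto intro: proj_derived_free_other)
  finally show ?thesis
    using assms by (simp add: proj_free_lie_id derived_free_imp_free_lie)
qed

lemma proj_rels:
  assumes "s \<in> rels E \<A> RR" "B \<in> \<A>"
  shows "proj B s \<in> lie_ideal B (RR B)"
  using assms(1) unfolding rels_def
proof (elim UnE UN_E CollectE exE conjE)
  fix A assume A: "A \<in> \<A>" and s: "s \<in> RR A"
  then have s_derived: "s \<in> derived_free A"
    using relators_derived by blast
  show ?thesis
  proof (cases "A = B")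
    case True
    then have "proj B s = s"
      using s_derived by (simp add: proj_free_lie_id derived_free_imp_free_lie)
    with True s show ?thesis
      by (simp add: lie_ideal.li_gen)
  next
    case False
    have "proj B s = 0"
      using A assms(2) False s_derived by (rule proj_derived_free_other)
    then show ?thesis
      by (simp add: lie_ideal.li_zero)
  qed
next
  fix x y assume "s = lie_br (gen x) (gen y)" "\<forall>A\<in>\<A>. \<not> {x, y} \<subseteq> A"
  with assms(2) show ?thesis
    by (auto simp: proj_lie_br proj_gen intro: lie_ideal.li_zero)
qed

lemma proj_rels_ideal:
  assumes "u \<in> lie_ideal E (rels E \<A> RR)" "B \<in> \<A>"
  shows "proj B u \<in> lie_ideal B (RR B)"
  using assms(1) by (rule proj_lie_ideal) (rule proj_rels[OF _ assms(2)])

lemma local_ideal_imp_rels_ideal: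
  assumes "B \<in> \<A>" "p \<in> lie_ideal B (RR B)"
  shows "p \<in> lie_ideal E (rels E \<A> RR)"
  using assms(2) subset_ground[OF assms(1)]
proof (rule lie_ideal_mono)
  show "RR B \<subseteq> rels E \<A> RR"
    using assms(1) unfolding rels_def by blast
qed

lemma proj_lie_br_gen_outside:
  assumes "A \<in> \<A>" "x \<notin> A" "v \<in> derived_free A" "B \<in> \<A>"
  shows "proj B (lie_br (gen x) v) = 0"
proof (cases "x \<in> B")
  case True
  with assms have "proj B v = 0"
    by (intro proj_derived_free_other[of A]) auto
  then show ?thesis by (simp add: proj_lie_br)
next
  case False
  then show ?thesis by (simp add: proj_lie_br proj_gen)
qed

lemma rels_ideal_if_proj_local:
  assumes "u \<in> local_derived_sum \<A> E (rels E \<A> RR)"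
    and proj_u: "\<forall>A\<in>\<A>. proj A u \<in> lie_ideal A (RR A)"
  shows "u \<in> lie_ideal E (rels E \<A> RR)"
proof -
  obtain v where v: "\<forall>A\<in>\<A>. v A \<in> derived_free A" and j: "u - sum v \<A> \<in> lie_ideal E (rels E \<A> RR)"
    using assms(1) by (rule local_derived_sumE)
  have "v B \<in> lie_ideal E (rels E \<A> RR)" if B: "B \<in> \<A>" for B
  proof -
    have "v B = proj B u - proj B (u - sum v \<A>)"
      using proj_sum_local_derived[OF v B] by (simp add: proj_diff)
    also have "\<dots> \<in> lie_ideal B (RR B)"
      using proj_u B by (blast intro: lie_ideal_diff proj_rels_ideal[OF j B])
    finally show ?thesis
      by (rule local_ideal_imp_rels_ideal[OF B])
  qed
  then have "sum v \<A> \<in> lie_ideal E (rels E \<A> RR)"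
    by (simp add: lie_ideal_sum finite_arrangement)
  from lie_ideal.li_add[OF j this] show ?thesis
    by simp
qed

(* For x \<in> A one has [x, F(A)'] \<subseteq> F(A)'; for x \<notin> A the hypothesis puts [x, F(A)'] into \<langle>R\<rangle>. *)

lemma lie_br_gen_local_derived_sum:
  assumes outside: "\<forall>A\<in>\<A>. \<forall>x\<in>E - A. \<forall>v\<in>derived_free A. lie_br (gen x) v \<in> lie_ideal E (rels E \<A> RR)"
    and x: "x \<in> E" and q: "q \<in> local_derived_sum \<A> E (rels E \<A> RR)"
  shows "lie_br (gen x) q \<in> local_derived_sum \<A> E (rels E \<A> RR)"
proof -
  let ?D = "local_derived_sum \<A> E (rels E \<A> RR)"
  obtain v where v: "\<forall>A\<in>\<A>. v A \<in> derived_free A" and j: "q - sum v \<A> \<in> lie_ideal E (rels E \<A> RR)"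
    using q by (rule local_derived_sumE)
  have "lie_br (gen x) (v A) \<in> ?D" if A: "A \<in> \<A>" for A
  proof (cases "x \<in> A")
    case True
    have "v A \<in> free_lie A"
      using v A by (simp add: derived_free_imp_free_lie)
    then have "lie_br (gen x) (v A) \<in> derived_free A"
      by (rule derived_free.df_br[OF free_lie.fl_gen[OF True]])
    then show ?thesis
      by (rule derived_free_imp_local_derived_sum[OF finite_arrangement A])
  next
    case False
    then have "lie_br (gen x) (v A) \<in> lie_ideal E (rels E \<A> RR)"
      using outside v A x by blast
    then show ?thesis
      by (rule lie_ideal_imp_local_derived_sum)
  qed
  then have "(\<Sum>A\<in>\<A>. lie_br (gen x) (v A)) \<in> ?D"
    by (rule local_derived_sum_sum[OF finite_arrangement])
  moreover have "lie_br (gen x) (q - sum v \<A>) \<in> ?D"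
    by (intro lie_ideal_imp_local_derived_sum lie_ideal.li_br free_lie.fl_gen x j)
  ultimately have "lie_br (gen x) (q - sum v \<A>) + (\<Sum>A\<in>\<A>. lie_br (gen x) (v A)) \<in> ?D"
    by (rule local_derived_sum_add[rotated])
  then show ?thesis
    by (simp add: lie_br_diff_right lie_br_sum_right)
qed

lemma derived_free_subset_local_derived_sum_rels:
  assumes outside: "\<forall>A\<in>\<A>. \<forall>x\<in>E - A. \<forall>v\<in>derived_free A. lie_br (gen x) v \<in> lie_ideal E (rels E \<A> RR)"
  shows "derived_free E \<subseteq> local_derived_sum \<A> E (rels E \<A> RR)"
proof -
  let ?D = "local_derived_sum \<A> E (rels E \<A> RR)"
  interpret ad_invariant_subspace E ?D
  proof unfold_locales
    show "0 \<in> ?D"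
      by (rule lie_ideal_imp_local_derived_sum[OF lie_ideal.li_zero])
  qed (rule lie_br_gen_local_derived_sum[OF outside] local_derived_sum_add local_derived_sum_scale;
      assumption)+
  show ?thesis
  proof (rule derived_free_subset)
    fix x y assume xy: "x \<in> E" "y \<in> E"
    show "lie_br (gen x) (gen y) \<in> ?D"
    proof (cases "\<exists>A\<in>\<A>. {x, y} \<subseteq> A")
      case True
      then obtain A where A: "A \<in> \<A>" and "x \<in> A" "y \<in> A"
        by blast
      then have "lie_br (gen x) (gen y) \<in> derived_free A"
        by (intro derived_free.df_br free_lie.fl_gen)
      then show ?thesis
        by (rule derived_free_imp_local_derived_sum[OF finite_arrangement A])
    next
      case False
      with xy have "lie_br (gen x) (gen y) \<in> rels E \<A> RR"
        unfolding rels_def by blast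
      then show ?thesis
        by (intro lie_ideal_imp_local_derived_sum lie_ideal.li_gen)
    qed
  qed
qed

end

theorem mainTheorem1:
  fixes E :: "'e set" and \<A> :: "'e set set" and RR :: "'e set \<Rightarrow> ('e list \<Rightarrow> 'k::field) set"
  assumes "finite E"
    and "set_arrangement E \<A>"
    and "\<forall>A\<in>\<A>. RR A \<subseteq> derived_free A"
  shows "(\<forall>u\<in>derived_free E.
            (\<forall>A\<in>\<A>. proj A u \<in> lie_ideal A (RR A)) \<longrightarrow> u \<in> lie_ideal E (rels E \<A> RR))
         \<longleftrightarrow>
         (\<forall>A\<in>\<A>. \<forall>x\<in>E - A. \<forall>v\<in>derived_free A.
            lie_br (gen x) v \<in> lie_ideal E (rels E \<A> RR))"
proof -
  interpret lie_arrangement E \<A> RR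
    using assms by unfold_locales auto
  show ?thesis
  proof
    assume kernel_trivial: "\<forall>u\<in>derived_free E.
      (\<forall>A\<in>\<A>. proj A u \<in> lie_ideal A (RR A)) \<longrightarrow> u \<in> lie_ideal E (rels E \<A> RR)"
    show "\<forall>A\<in>\<A>. \<forall>x\<in>E - A. \<forall>v\<in>derived_free A. lie_br (gen x) v \<in> lie_ideal E (rels E \<A> RR)"
    proof (intro ballI)
      fix A x and v :: "'e list \<Rightarrow> 'k"
      assume A: "A \<in> \<A>" and x: "x \<in> E - A" and v: "v \<in> derived_free A"
      have "lie_br (gen x) v \<in> derived_free E"
        using A x v subset_ground
        by (blast intro: derived_free.df_br free_lie.fl_gen free_lie_mono derived_free_imp_free_lie)
      moreover have "\<forall>B\<in>\<A>. proj B (lie_br (gen x) v) \<in> lie_ideal B (RR B)"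
        using proj_lie_br_gen_outside[OF A _ v] x by (simp add: lie_ideal.li_zero)
      ultimately show "lie_br (gen x) v \<in> lie_ideal E (rels E \<A> RR)"
        using kernel_trivial by blast
    qed
  qed (use derived_free_subset_local_derived_sum_rels rels_ideal_if_proj_local in blast)
qed

end
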